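(* Let ${\cal X}\subset\mathbb{R}^d$ be closed and let $\mathbb{H}$ be an RKHS of real functions on ${\cal X}$ with kernel $k$ such that (D) $\mathbb{H}\subset C_0({\cal X})$, where $C_0({\cal X})$ is the space of continuous real functions on ${\cal X}$ vanishing at infinity, and (E) $\mathbb{H}$ is dense in $L^2(\pi)$ for every probability measure $\pi$ on ${\cal X}$. Then for every $N\in\mathbb{N}$ the tensor product RKHS $\mathbb{H}^{\otimes N}$ on ${\cal X}^N$ is characteristic.
   Context: $\mathbb{H}^{\otimes N}=\mathbb{H}\otimes\cdots\otimes\mathbb{H}$ is the RKHS on ${\cal X}^N$ with kernel $k^{\otimes N}({\bf x}^{1:N},{\bf y}^{1:N})=\prod_{n=1}^N k({\bf x}^n,{\bf y}^n)$ and canonical feature map ${\bf x}^{1:N}\mapsto\phi({\bf x}^1)\otimes\cdots\otimes\phi({\bf x}^N)$, $\phi({\bf x})=k(\cdot,{\bf x})$. An RKHS $\mathbb{F}$ on a space ${\cal S}$ with feature map $\psi$ is called characteristic if the mean embedding map $\pi\mapsto\mu_\pi=\mathbb{E}_{X\sim\pi}[\psi(X)]\in\mathbb{F}$ is injective on the set of probability distributions on ${\cal S}$. *)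

theory Defs
  imports "HOL-Probability.Probability"
begin

text \<open>The RKHS of the kernel k(x,y) = <phi x, phi y> realised through a feature
  map phi into a Hilbert space: its elements are the functions x |-> <h, phi x>.\<close>
definition rkhs :: "('a \<Rightarrow> 'h::real_inner) \<Rightarrow> ('a \<Rightarrow> real) set" where
  "rkhs \<phi> = {f. \<exists>h. f = (\<lambda>x. inner h (\<phi> x))}"

definition feature_kernel :: "('a \<Rightarrow> 'h::real_inner) \<Rightarrow> 'a \<Rightarrow> 'a \<Rightarrow> real" where
  "feature_kernel \<phi> x y = inner (\<phi> x) (\<phi> y)"

definition C0_on :: "('a::topological_space) set \<Rightarrow> ('a \<Rightarrow> real) set" where
  "C0_on X = {f. continuous_on X f \<and>
      (\<forall>\<epsilon>>0. \<exists>K. compact K \<and> (\<forall>x\<in>X - K. \<bar>f x\<bar> < \<epsilon>))}"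

definition dense_in_L2 :: "('a \<Rightarrow> real) set \<Rightarrow> 'a measure \<Rightarrow> bool" where
  "dense_in_L2 H \<pi> \<longleftrightarrow>
     (\<forall>f\<in>borel_measurable \<pi>. integrable \<pi> (\<lambda>x. (f x)\<^sup>2) \<longrightarrow>
        (\<forall>\<epsilon>>0. \<exists>g\<in>H. (\<integral>x. (f x - g x)\<^sup>2 \<partial>\<pi>) < \<epsilon>))"

definition mean_embedding :: "'a measure \<Rightarrow> ('a \<Rightarrow> 'b::{banach,second_countable_topology}) \<Rightarrow> 'b" where
  "mean_embedding P \<psi> = (\<integral>x. \<psi> x \<partial>P)"

definition characteristic :: "'a measure \<Rightarrow> ('a \<Rightarrow> 'b::{banach,second_countable_topology}) \<Rightarrow> bool" where
  "characteristic S \<psi> \<longleftrightarrow>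
     (\<forall>P Q. prob_space P \<and> prob_space Q \<and> sets P = sets S \<and> sets Q = sets S \<and>
        mean_embedding P \<psi> = mean_embedding Q \<psi> \<longrightarrow> P = Q)"

definition prod_space :: "('a::topological_space) set \<Rightarrow> nat \<Rightarrow> (nat \<Rightarrow> 'a) measure" where
  "prod_space X N = PiM {..<N} (\<lambda>_. restrict_space borel X)"

end

theory Submission
  imports Defs
begin

text \<open>
  By (D) every function in \<open>H\<close> is bounded, so \<open>\<phi>\<close> is bounded by the uniform boundedness principle
  and the kernel of \<open>\<psi>\<close> is bounded and measurable. Hence \<open>\<psi>\<close>, weakly measurable with values in a
  separable Hilbert space, is Bochner integrable, and equal mean embeddings of \<open>P\<close> and \<open>Q\<close> give equal
  integrals of \<open>x \<mapsto> \<Prod>\<^sub>n k(x\<^sub>n, y\<^sub>n)\<close> for every \<open>y\<close>. Such equalities extend one coordinate at a time,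
  the other factors being arbitrary bounded measurable functions: from the kernel sections
  \<open>k(\<cdot>, y\<^sub>n)\<close> to all of \<open>H\<close>, because a bounded linear functional on \<open>H\<close> vanishing on every \<open>\<phi>(y)\<close>
  and on their orthogonal complement is zero; and from \<open>H\<close> to indicators of Borel sets, which by (E)
  are approximated in \<open>L\<^sup>2\<close> of the average of the two marginals. Products of indicators form an
  intersection-stable generator of the product \<open>\<sigma>\<close>-algebra, so \<open>P = Q\<close>.
\<close>

section \<open>Orthogonal projection in Hilbert spaces\<close>

lemma parallelogram_law:
  fixes a b :: "'a::real_inner"
  shows "(norm (a + b))\<^sup>2 + (norm (a - b))\<^sup>2 = 2 * (norm a)\<^sup>2 + 2 * (norm b)\<^sup>2"
  by (simp add: power2_norm_eq_inner inner_add inner_diff inner_commute algebra_simps)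

lemma abs_inner_le_norm_mult:
  fixes a b :: "'a::real_inner"
  assumes "norm b \<le> C"
  shows "\<bar>inner a b\<bar> \<le> norm a * C"
  using Cauchy_Schwarz_ineq2[of a b] mult_left_mono[OF assms, of "norm a"] by simp

lemma minimizing_sequence_Cauchy:
  fixes V :: "'a::real_inner set"
  assumes "convex V" and d_le: "\<And>v. v \<in> V \<Longrightarrow> d \<le> norm (h - v)" and "0 \<le> d"
    and v: "\<And>n. v n \<in> V" "\<And>n. (norm (h - v n))\<^sup>2 < d\<^sup>2 + 1 / Suc n"
  shows "Cauchy v"
proof (rule metric_CauchyI)
  \<comment> \<open>The parallelogram law for \<open>h - v k\<close> and \<open>h - v m\<close>, whose midpoint lies in \<open>V\<close>.\<close>
  have v_close: "(norm (v k - v m))\<^sup>2 \<le> 2 / Suc k + 2 / Suc m" for k m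
  proof -
    have "(1/2) *\<^sub>R v k + (1/2) *\<^sub>R v m \<in> V"
      using \<open>convex V\<close> v(1)[of k] v(1)[of m] by (rule convexD) auto
    then have "d\<^sup>2 \<le> (norm (h - (1/2) *\<^sub>R (v k + v m)))\<^sup>2"
      using d_le \<open>0 \<le> d\<close> by (simp add: power_mono scaleR_add_right)
    moreover have "(h - v k) + (h - v m) = 2 *\<^sub>R (h - (1/2) *\<^sub>R (v k + v m))"
      by (simp add: algebra_simps scaleR_2)
    then have "(norm ((h - v k) + (h - v m)))\<^sup>2 = 4 * (norm (h - (1/2) *\<^sub>R (v k + v m)))\<^sup>2"
      by (simp add: power_mult_distrib)
    moreover have "(h - v k) - (h - v m) = -(v k - v m)"
      by simp
    ultimately have "(norm (v k - v m))\<^sup>2 \<le> 2 * (norm (h - v k))\<^sup>2 + 2 * (norm (h - v m))\<^sup>2 - 4 * d\<^sup>2"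
      using parallelogram_law[of "h - v k" "h - v m"] by (simp only: norm_minus_cancel)
    then show ?thesis using v(2)[of k] v(2)[of m] by linarith
  qed
  fix e :: real assume e: "e > 0"
  obtain M :: nat where M: "4 / e\<^sup>2 < M" using reals_Archimedean2 by blast
  have "dist (v m) (v n) < e" if "M \<le> m" "M \<le> n" for m n
  proof -
    have "2 / Suc m \<le> 2 / Suc M" "2 / Suc n \<le> 2 / Suc M"
      using that by (auto simp: frac_le)
    moreover have "4 / Suc M < e\<^sup>2"
    proof -
      have "4 < real M * e\<^sup>2" "0 < e\<^sup>2"
        using M e by (simp_all add: field_simps)
      then have "4 < e\<^sup>2 + real M * e\<^sup>2" by linarith
      then show ?thesis by (simp add: field_simps)
    qed
    ultimately have "(norm (v m - v n))\<^sup>2 < e\<^sup>2"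
      using v_close[of m n] by linarith
    then show ?thesis using e by (simp add: dist_norm power_less_imp_less_base)
  qed
  then show "\<exists>M. \<forall>m\<ge>M. \<forall>n\<ge>M. dist (v m) (v n) < e" by blast
qed

lemma closed_convex_nearest_point:
  fixes V :: "'a::{real_inner,complete_space} set"
  assumes "convex V" "closed V" "V \<noteq> {}"
  obtains p where "p \<in> V" "\<And>v. v \<in> V \<Longrightarrow> norm (h - p) \<le> norm (h - v)"
proof -
  define d where "d = (INF v\<in>V. norm (h - v))"
  have d_le: "d \<le> norm (h - v)" if "v \<in> V" for v
    unfolding d_def using that by (intro cINF_lower bdd_belowI[of _ 0]) auto
  have d_nonneg: "0 \<le> d"
    unfolding d_def using assms(3) by (intro cINF_greatest) auto
  have "\<exists>v\<in>V. (norm (h - v))\<^sup>2 < d\<^sup>2 + 1 / Suc n" for n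
  proof -
    have "d < sqrt (d\<^sup>2 + 1 / Suc n)"
      using d_nonneg by (simp add: real_less_rsqrt)
    then obtain v where v: "v \<in> V" "norm (h - v) < sqrt (d\<^sup>2 + 1 / Suc n)"
      unfolding d_def using assms(3) by (subst (asm) cINF_less_iff) (auto intro: bdd_belowI[of _ 0])
    then have "(norm (h - v))\<^sup>2 < (sqrt (d\<^sup>2 + 1 / Suc n))\<^sup>2"
      by (intro power_strict_mono) auto
    with v(1) show ?thesis by auto
  qed
  then obtain v where v: "\<And>n. v n \<in> V" "\<And>n. (norm (h - v n))\<^sup>2 < d\<^sup>2 + 1 / Suc n"
    by metis
  then have "Cauchy v"
    using assms(1) d_le d_nonneg by (intro minimizing_sequence_Cauchy)
  then obtain p where p: "v \<longlonglongrightarrow> p"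
    using convergent_eq_Cauchy by blast
  have "p \<in> V"
    using assms(2) v(1) p closed_sequentially by blast
  moreover have "(norm (h - p))\<^sup>2 \<le> d\<^sup>2"
  proof (rule LIMSEQ_le)
    show "(\<lambda>n. (norm (h - v n))\<^sup>2) \<longlonglongrightarrow> (norm (h - p))\<^sup>2"
      by (intro tendsto_intros p)
    show "(\<lambda>n. d\<^sup>2 + 1 / Suc n) \<longlonglongrightarrow> d\<^sup>2"
      using tendsto_add[OF tendsto_const LIMSEQ_inverse_real_of_nat] by (simp add: inverse_eq_divide)
  qed (use v(2) in \<open>auto intro: less_imp_le\<close>)
  then have "norm (h - p) \<le> d"
    using d_nonneg by (rule power2_le_imp_le)
  ultimately show ?thesis
    using that d_le by (meson order_trans)
qed

lemma nearest_point_orthogonal: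
  fixes V :: "'a::real_inner set"
  assumes "subspace V" "p \<in> V" "\<And>v. v \<in> V \<Longrightarrow> norm (h - p) \<le> norm (h - v)" "w \<in> V"
  shows "inner (h - p) w = 0"
proof -
  define c where "c = inner (h - p) w"
  define t where "t = c / ((norm w)\<^sup>2 + 1)"
  have "p + t *\<^sub>R w \<in> V"
    using assms(1,2,4) by (simp add: subspace_add subspace_scale)
  then have "(norm (h - p))\<^sup>2 \<le> (norm (h - (p + t *\<^sub>R w)))\<^sup>2"
    using assms(3) by (simp add: power_mono)
  also have "\<dots> = (norm (h - p))\<^sup>2 - 2 * t * c + t\<^sup>2 * (norm w)\<^sup>2"
    unfolding c_def power2_norm_eq_inner
    by (simp add: inner_diff inner_add inner_commute algebra_simps power2_eq_square)
  also have "\<dots> = (norm (h - p))\<^sup>2 - t\<^sup>2 * ((norm w)\<^sup>2 + 2)"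
  proof -
    have "0 < (norm w)\<^sup>2 + 1"
      by (metis add_nonneg_pos zero_le_power2 zero_less_one)
    then have "c = t * ((norm w)\<^sup>2 + 1)"
      unfolding t_def by simp
    then show ?thesis by (simp add: power2_eq_square algebra_simps)
  qed
  finally have "t\<^sup>2 * ((norm w)\<^sup>2 + 2) \<le> 0" by simp
  then have "t = 0"
    by (smt (verit) mult_pos_pos zero_le_power2 zero_less_power2)
  then show ?thesis
    by (simp add: t_def c_def add_nonneg_eq_0_iff)
qed

lemma closed_subspace_orthogonal_decomposition:
  fixes V :: "'a::{real_inner,complete_space} set"
  assumes "subspace V" "closed V"
  obtains p where "p \<in> V" "\<And>v. v \<in> V \<Longrightarrow> inner (h - p) v = 0"
proof -
  have "convex V" "V \<noteq> {}"
    using assms(1) subspace_0[OF assms(1)] by (auto simp: subspace_imp_convex)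
  then show ?thesis
    using closed_convex_nearest_point[OF _ assms(2)] nearest_point_orthogonal[OF assms(1)] that by metis
qed

lemma bounded_linear_eq_0_if_vanishes_on_set_and_orthogonal:
  fixes L :: "'a::{real_inner,complete_space} \<Rightarrow> real"
  assumes "bounded_linear L"
    and "\<And>a. a \<in> A \<Longrightarrow> L a = 0"
    and "\<And>q. (\<And>a. a \<in> A \<Longrightarrow> inner q a = 0) \<Longrightarrow> L q = 0"
  shows "L h = 0"
proof -
  interpret L: bounded_linear L by fact
  define Z where "Z = {a. L a = 0}"
  have "subspace Z"
    by (simp add: Z_def subspace_def L.add L.scale)
  moreover have "closed Z"
    unfolding Z_def by (intro closed_Collect_eq L.continuous_on continuous_on_const continuous_on_id)
  ultimately obtain p where p: "p \<in> Z" "\<And>v. v \<in> Z \<Longrightarrow> inner (h - p) v = 0"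
    using closed_subspace_orthogonal_decomposition by metis
  have "L (h - p) = 0"
    using assms(2) p(2) by (intro assms(3)) (simp add: Z_def)
  then show ?thesis
    using p(1) by (simp add: Z_def L.diff)
qed

section \<open>Weak measurability and uniform boundedness\<close>

lemma borel_measurable_inner_if_measurable_on_range:
  fixes \<psi> :: "'a \<Rightarrow> 'b::{real_inner,complete_space}"
  assumes "\<And>y. y \<in> space M \<Longrightarrow> (\<lambda>x. inner (\<psi> x) (\<psi> y)) \<in> borel_measurable M"
  shows "(\<lambda>x. inner (\<psi> x) c) \<in> borel_measurable M"
proof -
  define Z where "Z = {c. (\<lambda>x. inner (\<psi> x) c) \<in> borel_measurable M}"
  have "subspace Z"
    unfolding Z_def subspace_def by (auto simp: inner_add_right)
  moreover have "closed Z"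
    unfolding closed_sequential_limits
  proof safe
    fix v l assume v: "\<forall>n. v n \<in> Z" and l: "v \<longlonglongrightarrow> l"
    show "l \<in> Z"
      unfolding Z_def mem_Collect_eq
    proof (rule borel_measurable_LIMSEQ_real)
      show "(\<lambda>n. inner (\<psi> x) (v n)) \<longlonglongrightarrow> inner (\<psi> x) l" for x
        using l by (intro tendsto_intros)
      show "(\<lambda>x. inner (\<psi> x) (v n)) \<in> borel_measurable M" for n
        using v by (simp add: Z_def)
    qed
  qed
  ultimately obtain p where p: "p \<in> Z" "\<And>v. v \<in> Z \<Longrightarrow> inner (c - p) v = 0"
    using closed_subspace_orthogonal_decomposition by metis
  have "inner (\<psi> x) c = inner (\<psi> x) p" if "x \<in> space M" for x
  proof -
    have "inner (\<psi> x) (c - p) = 0"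
      using p(2) assms[OF that] by (simp add: Z_def inner_commute)
    then show ?thesis
      by (simp add: inner_diff_right)
  qed
  moreover have "(\<lambda>x. inner (\<psi> x) p) \<in> borel_measurable M"
    using p(1) by (simp add: Z_def)
  ultimately show ?thesis
    by (simp cong: measurable_cong)
qed

lemma borel_measurable_if_dist_measurable:
  fixes f :: "'a \<Rightarrow> 'b::{metric_space,second_countable_topology}"
  assumes "\<And>c. (\<lambda>x. dist (f x) c) \<in> borel_measurable M"
  shows "f \<in> borel_measurable M"
proof -
  obtain D :: "'b set" where basis: "topological_basis (case_prod ball ` (D \<times> (\<rat> \<inter> {0<..})))"
    and "countable D"
    by (rule balls_countable_basis)
  then have borel_eq: "borel = sigma UNIV (case_prod ball ` (D \<times> (\<rat> \<inter> {0<..})))"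
    by (intro borel_eq_countable_basis) (auto intro: countable_rat)
  have "f -` ball c r \<inter> space M \<in> sets M" for c r
  proof -
    have "f -` ball c r \<inter> space M = {x \<in> space M. dist (f x) c < r}"
      by (auto simp: dist_commute)
    also have "\<dots> \<in> sets M"
      using assms[of c] by measurable
    finally show ?thesis .
  qed
  then have "f \<in> measurable M (sigma UNIV (case_prod ball ` (D \<times> (\<rat> \<inter> {0<..}))))"
    by (intro measurable_measure_of) auto
  then show ?thesis
    by (simp only: borel_eq)
qed

lemma two_inner_minus_norm_sq:
  fixes v d :: "'a::real_inner"
  shows "2 * inner v d - (norm d)\<^sup>2 = (norm v)\<^sup>2 - (norm (v - d))\<^sup>2"
  by (simp add: power2_norm_eq_inner inner_diff inner_commute algebra_simps)

lemma norm_sq_eq_SUP_dense: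
  fixes v :: "'a::real_inner"
  assumes dense: "\<And>U. open U \<Longrightarrow> U \<noteq> {} \<Longrightarrow> \<exists>d\<in>D. d \<in> U"
  shows "(norm v)\<^sup>2 = (SUP d\<in>D. 2 * inner v d - (norm d)\<^sup>2)"
  unfolding two_inner_minus_norm_sq
proof (rule cSup_eq_non_empty[symmetric])
  show "(\<lambda>d. (norm v)\<^sup>2 - (norm (v - d))\<^sup>2) ` D \<noteq> {}"
    using dense[of UNIV] by auto
  show "x \<le> (norm v)\<^sup>2" if "x \<in> (\<lambda>d. (norm v)\<^sup>2 - (norm (v - d))\<^sup>2) ` D" for x
    using that by auto
  fix y assume ub: "\<And>x. x \<in> (\<lambda>d. (norm v)\<^sup>2 - (norm (v - d))\<^sup>2) ` D \<Longrightarrow> x \<le> y"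
  show "(norm v)\<^sup>2 \<le> y"
  proof (rule field_le_epsilon)
    fix e :: real assume "0 < e"
    then obtain d where "d \<in> D" "d \<in> ball v (sqrt e)"
      using dense[of "ball v (sqrt e)"] by auto
    moreover have "(norm (v - d))\<^sup>2 < e"
    proof -
      have "(norm (v - d))\<^sup>2 < (sqrt e)\<^sup>2"
        using \<open>d \<in> ball v (sqrt e)\<close> by (intro power_strict_mono) (auto simp: dist_norm)
      then show ?thesis using \<open>0 < e\<close> by simp
    qed
    ultimately have "(norm v)\<^sup>2 - (norm (v - d))\<^sup>2 \<le> y" "(norm (v - d))\<^sup>2 < e"
      using ub by auto
    then show "(norm v)\<^sup>2 \<le> y + e" by linarith
  qed
qed

lemma borel_measurable_if_weakly_measurable:
  fixes f :: "'a \<Rightarrow> 'b::{real_inner,second_countable_topology}"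
  assumes "\<And>c. (\<lambda>x. inner (f x) c) \<in> borel_measurable M"
  shows "f \<in> borel_measurable M"
proof (rule borel_measurable_if_dist_measurable)
  fix c
  obtain D :: "'b set" where "countable D" and dense: "\<And>U. open U \<Longrightarrow> U \<noteq> {} \<Longrightarrow> \<exists>d\<in>D. d \<in> U"
    by (erule countable_dense_setE)
  have "(dist (f x) c)\<^sup>2 = (SUP d\<in>D. 2 * inner (f x - c) d - (norm d)\<^sup>2)" for x
    by (simp add: dist_norm norm_sq_eq_SUP_dense[OF dense])
  moreover have "(\<lambda>x. SUP d\<in>D. 2 * inner (f x - c) d - (norm d)\<^sup>2) \<in> borel_measurable M"
  proof (rule borel_measurable_cSUP)
    show "(\<lambda>x. 2 * inner (f x - c) d - (norm d)\<^sup>2) \<in> borel_measurable M" for d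
      using assms[of d] by (simp add: inner_diff_left)
    show "bdd_above ((\<lambda>d. 2 * inner (f x - c) d - (norm d)\<^sup>2) ` D)" for x
      by (rule bdd_aboveI[of _ "(norm (f x - c))\<^sup>2"]) (auto simp: two_inner_minus_norm_sq)
  qed fact
  ultimately have "(\<lambda>x. sqrt ((dist (f x) c)\<^sup>2)) \<in> borel_measurable M"
    by simp
  then show "(\<lambda>x. dist (f x) c) \<in> borel_measurable M"
    by simp
qed

lemma norm_le_if_inner_bounded_on_ball:
  fixes v :: "'a::real_inner"
  assumes "r > 0" and bounded: "\<And>h. h \<in> ball h0 r \<Longrightarrow> \<bar>inner h v\<bar> \<le> c"
  shows "norm v \<le> 4 * c / r"
proof (cases "v = 0")
  case True
  then show ?thesis
    using bounded[of h0] \<open>r > 0\<close> by simp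
next
  case False
  \<comment> \<open>Test \<open>v\<close> against \<open>h0\<close> and \<open>h0 + u\<close>, where \<open>u\<close> points along \<open>v\<close> with length \<open>r/2\<close>.\<close>
  define u where "u = (r / 2 / norm v) *\<^sub>R v"
  have "h0 + u \<in> ball h0 r" "h0 \<in> ball h0 r"
    using False \<open>r > 0\<close> by (simp_all add: u_def dist_norm)
  then have "\<bar>inner (h0 + u) v\<bar> \<le> c" "\<bar>inner h0 v\<bar> \<le> c"
    by (simp_all add: bounded)
  moreover have "inner u v = r / 2 * norm v"
    using False by (simp add: u_def power2_norm_eq_inner[symmetric] power2_eq_square)
  ultimately have "r / 2 * norm v \<le> 2 * c"
    by (simp add: inner_add_left)
  then show ?thesis
    using \<open>r > 0\<close> by (simp add: field_simps)
qed

lemma bounded_norm_if_weakly_bounded: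
  fixes \<phi> :: "'b \<Rightarrow> 'h::{real_inner,complete_space}"
  assumes bounded: "\<And>h. \<exists>B. \<forall>x\<in>X. \<bar>inner h (\<phi> x)\<bar> \<le> B"
  obtains C where "\<And>x. x \<in> X \<Longrightarrow> norm (\<phi> x) \<le> C"
proof -
  define F where "F n = {h. \<forall>x\<in>X. \<bar>inner h (\<phi> x)\<bar> \<le> real n}" for n :: nat
  have closed_F: "closed (F n)" for n
  proof -
    have "F n = (\<Inter>x\<in>X. {h. \<bar>inner h (\<phi> x)\<bar> \<le> real n})"
      unfolding F_def by auto
    then show ?thesis
      by (auto intro!: closed_INT closed_Collect_le continuous_intros)
  qed
  have "h \<in> \<Union>(range F)" for h
  proof -
    obtain B where "\<forall>x\<in>X. \<bar>inner h (\<phi> x)\<bar> \<le> B" using bounded by blast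
    moreover obtain n :: nat where "B \<le> real n" using real_arch_simple by blast
    ultimately have "h \<in> F n" unfolding F_def by force
    then show ?thesis by blast
  qed
  then have "\<Union>(range F) = UNIV"
    by blast
  then obtain n where "euclidean interior_of (F n) \<noteq> {}"
    using Baire_category_alt[of euclidean "range F"] closed_F
    by (force simp: completely_metrizable_space_euclidean)
  then obtain h0 r where r: "r > 0" "ball h0 r \<subseteq> F n"
    by (metis equals0I interior_of_subset open_contains_ball open_openin openin_interior_of subset_trans)
  have "norm (\<phi> x) \<le> 4 * real n / r" if "x \<in> X" for x
    using r that unfolding F_def by (intro norm_le_if_inner_bounded_on_ball) auto
  then show ?thesis by (rule that)
qed

lemma C0_on_bounded:
  fixes f :: "'a::topological_space \<Rightarrow> real"
  assumes "closed X" "f \<in> C0_on X"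
  obtains B where "\<And>x. x \<in> X \<Longrightarrow> \<bar>f x\<bar> \<le> B"
proof -
  have "\<exists>K. compact K \<and> (\<forall>x\<in>X - K. \<bar>f x\<bar> < 1)"
    using assms(2) unfolding C0_on_def by simp
  then obtain K where K: "compact K" "\<And>x. x \<in> X - K \<Longrightarrow> \<bar>f x\<bar> < 1"
    by blast
  have "continuous_on (X \<inter> K) f"
    using assms(2) by (auto simp: C0_on_def intro: continuous_on_subset)
  moreover have "compact (X \<inter> K)"
    using assms(1) K(1) by (rule closed_Int_compact)
  ultimately have "bounded (f ` (X \<inter> K))"
    by (intro compact_imp_bounded compact_continuous_image)
  then obtain a where a: "\<And>x. x \<in> X \<inter> K \<Longrightarrow> \<bar>f x\<bar> \<le> a"
    unfolding bounded_real by blast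
  have "\<bar>f x\<bar> \<le> max a 1" if "x \<in> X" for x
    using a[of x] K(2)[of x] that by (cases "x \<in> K") auto
  then show ?thesis by (rule that)
qed

section \<open>Bounded measurable functions and their integrals\<close>

definition bounded_measurable :: "'a measure \<Rightarrow> ('a \<Rightarrow> real) set" where
  "bounded_measurable M = {f \<in> borel_measurable M. \<exists>B. \<forall>x\<in>space M. \<bar>f x\<bar> \<le> B}"

lemma bounded_measurableI:
  "f \<in> borel_measurable M \<Longrightarrow> (\<And>x. x \<in> space M \<Longrightarrow> \<bar>f x\<bar> \<le> B) \<Longrightarrow> f \<in> bounded_measurable M"
  unfolding bounded_measurable_def by blast

lemma bounded_measurableE:
  assumes "f \<in> bounded_measurable M"
  obtains B where "f \<in> borel_measurable M" "0 \<le> B" "\<And>x. x \<in> space M \<Longrightarrow> \<bar>f x\<bar> \<le> B"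
proof -
  obtain B where "f \<in> borel_measurable M" "\<And>x. x \<in> space M \<Longrightarrow> \<bar>f x\<bar> \<le> B"
    using assms unfolding bounded_measurable_def by blast
  then show ?thesis
    using that[of "max 0 B"] by fastforce
qed

lemma bounded_measurable_inner_feature:
  assumes "\<And>z. z \<in> space M \<Longrightarrow> norm (\<phi> z) \<le> C" "(\<lambda>z. inner h (\<phi> z)) \<in> borel_measurable M"
  shows "(\<lambda>z. inner h (\<phi> z)) \<in> bounded_measurable M"
  using assms(2) abs_inner_le_norm_mult[OF assms(1)] by (rule bounded_measurableI)

lemma rkhs_subset_bounded_measurable:
  assumes "\<And>z. z \<in> space M \<Longrightarrow> norm (\<phi> z) \<le> C" "\<And>h. (\<lambda>z. inner h (\<phi> z)) \<in> borel_measurable M"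
  shows "rkhs \<phi> \<subseteq> bounded_measurable M"
  using assms by (auto simp: rkhs_def intro: bounded_measurable_inner_feature)

lemma bounded_measurable_cong_sets:
  assumes "sets M = sets N"
  shows "bounded_measurable M = bounded_measurable N"
  using measurable_cong_sets[OF assms refl, where 'b=real] sets_eq_imp_space_eq[OF assms]
  unfolding bounded_measurable_def by auto

lemma bounded_measurable_comp:
  assumes "f \<in> bounded_measurable M" "Y \<in> measurable N M"
  shows "(\<lambda>x. f (Y x)) \<in> bounded_measurable N"
proof -
  obtain B where "f \<in> borel_measurable M" "0 \<le> B" "\<And>z. z \<in> space M \<Longrightarrow> \<bar>f z\<bar> \<le> B"
    using assms(1) bounded_measurableE by metis
  then show ?thesis
    using assms(2) by (intro bounded_measurableI[of _ _ B]) (auto simp: measurable_space)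
qed

lemma bounded_measurable_mult:
  assumes "f \<in> bounded_measurable M" "g \<in> bounded_measurable M"
  shows "(\<lambda>x. f x * g x) \<in> bounded_measurable M"
proof -
  obtain A B where "f \<in> borel_measurable M" "\<And>x. x \<in> space M \<Longrightarrow> \<bar>f x\<bar> \<le> A"
    and "g \<in> borel_measurable M" "0 \<le> B" "\<And>x. x \<in> space M \<Longrightarrow> \<bar>g x\<bar> \<le> B"
    using assms by (metis bounded_measurableE)
  then show ?thesis
    by (intro bounded_measurableI[of _ _ "A * B"]) (auto simp: abs_mult intro: mult_mono')
qed

lemma bounded_measurable_diff:
  assumes "f \<in> bounded_measurable M" "g \<in> bounded_measurable M"
  shows "(\<lambda>x. f x - g x) \<in> bounded_measurable M"
proof -
  obtain A B where "f \<in> borel_measurable M" "\<And>x. x \<in> space M \<Longrightarrow> \<bar>f x\<bar> \<le> A"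
    and "g \<in> borel_measurable M" "\<And>x. x \<in> space M \<Longrightarrow> \<bar>g x\<bar> \<le> B"
    using assms by (metis bounded_measurableE)
  then show ?thesis
    by (intro bounded_measurableI[of _ _ "A + B"]) (auto intro!: order_trans[OF abs_triangle_ineq4] add_mono)
qed

lemma bounded_measurable_prod:
  assumes "finite I" "\<And>i. i \<in> I \<Longrightarrow> f i \<in> bounded_measurable M"
  shows "(\<lambda>x. \<Prod>i\<in>I. f i x) \<in> bounded_measurable M"
  using assms
proof (induction I rule: finite_induct)
  case empty
  then show ?case by (auto intro: bounded_measurableI[of _ _ 1])
next
  case (insert i I)
  then show ?case by (simp add: bounded_measurable_mult)
qed

lemma indicator_bounded_measurable:
  "A \<in> sets M \<Longrightarrow> indicator A \<in> bounded_measurable M"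
  by (rule bounded_measurableI[of _ _ 1]) (auto simp: indicator_def)

lemma integrable_bounded_measurable:
  assumes "finite_measure M" "f \<in> bounded_measurable M"
  shows "integrable M f"
proof -
  obtain B where "f \<in> borel_measurable M" "0 \<le> B" "\<And>x. x \<in> space M \<Longrightarrow> \<bar>f x\<bar> \<le> B"
    using assms(2) bounded_measurableE by metis
  then show ?thesis
    by (intro finite_measure.integrable_const_bound[OF assms(1), where B=B] AE_I2) auto
qed

lemma abs_integral_le_bound:
  fixes f :: "'a \<Rightarrow> real"
  assumes "prob_space M" "integrable M f" "\<And>x. x \<in> space M \<Longrightarrow> \<bar>f x\<bar> \<le> B"
  shows "\<bar>integral\<^sup>L M f\<bar> \<le> B"
proof -
  have "\<bar>integral\<^sup>L M f\<bar> \<le> (\<integral>x. \<bar>f x\<bar> \<partial>M)"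
    by (rule integral_abs_bound)
  also have "\<dots> \<le> B"
    using assms by (intro prob_space.integral_le_const AE_I2) auto
  finally show ?thesis .
qed

lemma sum_measure_exists:
  assumes sets_eq: "sets \<nu> = sets \<mu>"
  obtains \<sigma> where "sets \<sigma> = sets \<mu>" "\<And>A. A \<in> sets \<mu> \<Longrightarrow> emeasure \<sigma> A = emeasure \<mu> A + emeasure \<nu> A"
proof -
  define \<sigma> where "\<sigma> = measure_of (space \<mu>) (sets \<mu>) (\<lambda>A. emeasure \<mu> A + emeasure \<nu> A)"
  have "countably_additive (sets \<mu>) (\<lambda>A. emeasure \<mu> A + emeasure \<nu> A)"
    unfolding countably_additive_def
  proof safe
    fix A :: "nat \<Rightarrow> _" assume A: "range A \<subseteq> sets \<mu>" "disjoint_family A" "\<Union>(range A) \<in> sets \<mu>"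
    then have "(\<Sum>i. emeasure \<mu> (A i)) = emeasure \<mu> (\<Union>(range A))"
      "(\<Sum>i. emeasure \<nu> (A i)) = emeasure \<nu> (\<Union>(range A))"
      using sets_eq by (auto intro: suminf_emeasure)
    then show "(\<Sum>i. emeasure \<mu> (A i) + emeasure \<nu> (A i)) = emeasure \<mu> (\<Union>(range A)) + emeasure \<nu> (\<Union>(range A))"
      by (simp add: suminf_add[symmetric])
  qed
  then have "emeasure \<sigma> A = emeasure \<mu> A + emeasure \<nu> A" if "A \<in> sets \<mu>" for A
    unfolding \<sigma>_def using that
    by (intro emeasure_measure_of_sigma sets.sigma_algebra_axioms) (auto simp: positive_def)
  moreover have "sets \<sigma> = sets \<mu>"
    by (simp add: \<sigma>_def)
  ultimately show ?thesis
    using that by blast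
qed

lemma prob_space_average:
  assumes \<mu>: "prob_space \<mu>" and \<nu>: "prob_space \<nu>" and sets_eq: "sets \<nu> = sets \<mu>"
  obtains \<pi> where "prob_space \<pi>" "sets \<pi> = sets \<mu>" "\<mu> \<le> scale_measure 2 \<pi>" "\<nu> \<le> scale_measure 2 \<pi>"
proof -
  obtain \<sigma> where sets_\<sigma>: "sets \<sigma> = sets \<mu>"
    and emeasure_\<sigma>: "\<And>A. A \<in> sets \<mu> \<Longrightarrow> emeasure \<sigma> A = emeasure \<mu> A + emeasure \<nu> A"
    using sum_measure_exists[OF sets_eq] by blast
  have two_half: "(2::ennreal) * ennreal (1/2) = 1"
    by (metis divide_inverse divide_self_if ennreal_1 ennreal_mult' ennreal_numeral
        inverse_eq_divide zero_le_numeral zero_neq_numeral)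
  define \<pi> where "\<pi> = scale_measure (ennreal (1/2)) \<sigma>"
  have "prob_space \<pi>"
  proof
    have "emeasure \<pi> (space \<pi>) = ennreal (1/2) * (emeasure \<mu> (space \<mu>) + emeasure \<nu> (space \<nu>))"
      using emeasure_\<sigma>[of "space \<mu>"] sets_eq_imp_space_eq[OF sets_\<sigma>] sets_eq_imp_space_eq[OF sets_eq]
      by (simp add: \<pi>_def space_scale_measure)
    also have "\<dots> = 1"
      using two_half by (simp add: \<mu>[THEN prob_space.emeasure_space_1] \<nu>[THEN prob_space.emeasure_space_1]
          one_add_one mult.commute)
    finally show "emeasure \<pi> (space \<pi>) = 1" .
  qed
  moreover have "scale_measure 2 \<pi> = \<sigma>"
    unfolding \<pi>_def by (simp only: scale_scale_measure two_half scale_measure_1)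
  moreover have "emeasure \<mu> A \<le> emeasure \<sigma> A \<and> emeasure \<nu> A \<le> emeasure \<sigma> A" for A
  proof (cases "A \<in> sets \<mu>")
    case True
    then show ?thesis
      by (simp add: emeasure_\<sigma> add_increasing add_increasing2)
  next
    case False
    then show ?thesis
      using sets_eq sets_\<sigma> by (simp add: emeasure_notin_sets)
  qed
  then have "\<mu> \<le> \<sigma>" "\<nu> \<le> \<sigma>"
    using sets_\<sigma> sets_eq sets_eq_imp_space_eq[OF sets_eq]
    by (auto simp: le_measure_iff le_fun_def sets_eq_imp_space_eq[OF sets_\<sigma>])
  ultimately show ?thesis
    using that sets_\<sigma> by (simp add: \<pi>_def)
qed

lemma integral_le_if_le_scale_measure:
  fixes f :: "'a \<Rightarrow> real"
  assumes sets_eq: "sets \<mu> = sets \<pi>" and le: "\<mu> \<le> scale_measure 2 \<pi>"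
    and "integrable \<mu> f" "integrable \<pi> f" and nonneg: "\<And>x. x \<in> space \<pi> \<Longrightarrow> 0 \<le> f x"
  shows "integral\<^sup>L \<mu> f \<le> 2 * integral\<^sup>L \<pi> f"
proof -
  have nonneg_\<mu>: "\<And>x. x \<in> space \<mu> \<Longrightarrow> 0 \<le> f x"
    using nonneg sets_eq_imp_space_eq[OF sets_eq] by simp
  have "ennreal (integral\<^sup>L \<mu> f) = (\<integral>\<^sup>+x. f x \<partial>\<mu>)"
    using assms(3) nonneg_\<mu> by (intro nn_integral_eq_integral[symmetric] AE_I2) auto
  also have "\<dots> \<le> (\<integral>\<^sup>+x. f x \<partial>scale_measure 2 \<pi>)"
    using sets_eq le by (intro nn_integral_mono_measure) auto
  also have "\<dots> = 2 * (\<integral>\<^sup>+x. f x \<partial>\<pi>)"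
    using assms(4) by (intro nn_integral_scale_measure) auto
  also have "(\<integral>\<^sup>+x. f x \<partial>\<pi>) = ennreal (integral\<^sup>L \<pi> f)"
    using assms(4) nonneg by (intro nn_integral_eq_integral AE_I2) auto
  finally have "ennreal (integral\<^sup>L \<mu> f) \<le> ennreal (2 * integral\<^sup>L \<pi> f)"
    using nonneg by (simp add: ennreal_mult integral_nonneg)
  then show ?thesis
    using nonneg by (simp add: ennreal_le_iff integral_nonneg)
qed

lemma abs_le_mult_pos_imp_eq_0:
  fixes D K :: real
  assumes "\<And>\<delta>. \<delta> > 0 \<Longrightarrow> \<bar>D\<bar> \<le> K * \<delta>"
  shows "D = 0"
proof -
  have "\<bar>D\<bar> \<le> 0 + e" if "e > 0" for e
  proof -
    have "\<bar>D\<bar> \<le> K * (e / (\<bar>K\<bar> + 1))"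
      using that by (intro assms) (simp add: add_nonneg_pos)
    also have "\<dots> \<le> \<bar>K\<bar> * (e / (\<bar>K\<bar> + 1))"
      using that by (intro mult_right_mono) auto
    also have "\<dots> \<le> e"
      using that by (simp add: field_simps add_nonneg_pos)
    finally show ?thesis by simp
  qed
  then show ?thesis
    using field_le_epsilon[of "\<bar>D\<bar>" 0] by simp
qed

text \<open>The elementary inequality \<open>|t| \<le> t\<^sup>2 / (2 \<delta>) + \<delta> / 2\<close> lets an \<open>L\<^sup>2\<close> bound on \<open>t\<close> control
  \<open>\<integral> t G\<close> without square roots.\<close>

lemma abs_integral_mult_le_integral_sq:
  fixes t G :: "'a \<Rightarrow> real"
  assumes "prob_space R" "t \<in> bounded_measurable R" "G \<in> bounded_measurable R"
    and G_bound: "\<And>x. x \<in> space R \<Longrightarrow> \<bar>G x\<bar> \<le> B" and "\<delta> > 0"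
  shows "\<bar>\<integral>x. t x * G x \<partial>R\<bar> \<le> B * ((\<integral>x. (t x)\<^sup>2 \<partial>R) / (2 * \<delta>) + \<delta> / 2)"
proof -
  have fin: "finite_measure R"
    using assms(1) by (rule prob_space.finite_measure)
  have integrable: "integrable R (\<lambda>x. t x * G x)" "integrable R (\<lambda>x. (t x)\<^sup>2)"
    using assms(2,3) by (auto intro!: integrable_bounded_measurable[OF fin] bounded_measurable_mult
        simp: power2_eq_square)
  have "\<bar>t x * G x\<bar> \<le> B * ((t x)\<^sup>2 / (2 * \<delta>) + \<delta> / 2)" if "x \<in> space R" for x
  proof -
    have "0 \<le> (\<bar>t x\<bar> - \<delta>)\<^sup>2"
      by simp
    then have "\<bar>t x\<bar> \<le> (t x)\<^sup>2 / (2 * \<delta>) + \<delta> / 2"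
      using \<open>\<delta> > 0\<close> by (simp add: field_simps power2_eq_square)
    then have "\<bar>t x\<bar> * \<bar>G x\<bar> \<le> ((t x)\<^sup>2 / (2 * \<delta>) + \<delta> / 2) * B"
      using G_bound[OF that] by (intro mult_mono) auto
    then show ?thesis
      by (simp only: abs_mult mult.commute)
  qed
  then have "(\<integral>x. \<bar>t x * G x\<bar> \<partial>R) \<le> (\<integral>x. B * ((t x)\<^sup>2 / (2 * \<delta>) + \<delta> / 2) \<partial>R)"
    using integrable fin by (intro integral_mono) (auto intro: finite_measure.integrable_const)
  then have "\<bar>\<integral>x. t x * G x \<partial>R\<bar> \<le> (\<integral>x. B * ((t x)\<^sup>2 / (2 * \<delta>) + \<delta> / 2) \<partial>R)"
    by (rule order_trans[OF integral_abs_bound])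
  also have "\<dots> = B * ((\<integral>x. (t x)\<^sup>2 \<partial>R) / (2 * \<delta>) + \<delta> / 2)"
    using integrable(2) assms(1) fin
    by (simp add: prob_space.prob_space finite_measure.integrable_const)
  finally show ?thesis .
qed

lemma simultaneous_L2_approximation:
  assumes \<mu>: "prob_space \<mu>" "sets \<mu> = sets M" and \<nu>: "prob_space \<nu>" "sets \<nu> = sets M"
    and dense: "\<And>\<pi>. prob_space \<pi> \<Longrightarrow> sets \<pi> = sets M \<Longrightarrow> dense_in_L2 F \<pi>"
    and F: "F \<subseteq> bounded_measurable M" and g: "g \<in> bounded_measurable M" and "\<epsilon> > 0"
  shows "\<exists>f\<in>F. (\<integral>z. (g z - f z)\<^sup>2 \<partial>\<mu>) \<le> 2 * \<epsilon> \<and> (\<integral>z. (g z - f z)\<^sup>2 \<partial>\<nu>) \<le> 2 * \<epsilon>"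
proof -
  obtain \<pi> where \<pi>: "prob_space \<pi>" "sets \<pi> = sets \<mu>" "\<mu> \<le> scale_measure 2 \<pi>" "\<nu> \<le> scale_measure 2 \<pi>"
    using prob_space_average[OF \<mu>(1) \<nu>(1)] \<mu>(2) \<nu>(2) by metis
  have sets_\<pi>: "sets \<pi> = sets M"
    using \<pi>(2) \<mu>(2) by simp
  have BM_\<pi>: "bounded_measurable \<pi> = bounded_measurable M"
    using sets_\<pi> by (rule bounded_measurable_cong_sets)
  have "(\<lambda>z. (g z)\<^sup>2) \<in> bounded_measurable M"
    using g by (simp add: power2_eq_square bounded_measurable_mult)
  then have "integrable \<pi> (\<lambda>z. (g z)\<^sup>2)"
    using \<pi>(1) BM_\<pi> by (intro integrable_bounded_measurable prob_space.finite_measure) auto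
  moreover have "g \<in> borel_measurable \<pi>"
    using g BM_\<pi> by (auto simp: bounded_measurable_def)
  ultimately obtain f where f: "f \<in> F" "(\<integral>z. (g z - f z)\<^sup>2 \<partial>\<pi>) < \<epsilon>"
    using dense[OF \<pi>(1) sets_\<pi>] \<open>\<epsilon> > 0\<close> unfolding dense_in_L2_def by blast
  have t: "(\<lambda>z. (g z - f z)\<^sup>2) \<in> bounded_measurable M"
    using g f(1) F by (auto simp: power2_eq_square intro!: bounded_measurable_mult bounded_measurable_diff)
  have "(\<integral>z. (g z - f z)\<^sup>2 \<partial>\<rho>) \<le> 2 * \<epsilon>"
    if "prob_space \<rho>" "sets \<rho> = sets \<pi>" "\<rho> \<le> scale_measure 2 \<pi>" for \<rho>
  proof -
    have "(\<integral>z. (g z - f z)\<^sup>2 \<partial>\<rho>) \<le> 2 * (\<integral>z. (g z - f z)\<^sup>2 \<partial>\<pi>)"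
    proof (rule integral_le_if_le_scale_measure)
      have "bounded_measurable \<rho> = bounded_measurable M"
        using that(2) sets_\<pi> by (intro bounded_measurable_cong_sets) simp
      then show "integrable \<rho> (\<lambda>z. (g z - f z)\<^sup>2)" "integrable \<pi> (\<lambda>z. (g z - f z)\<^sup>2)"
        using t \<pi>(1) that(1) BM_\<pi>
        by (auto intro!: integrable_bounded_measurable intro: prob_space.finite_measure)
    qed (use that in auto)
    then show ?thesis
      using f(2) by linarith
  qed
  then show ?thesis
    using f(1) \<pi> \<mu> \<nu> by blast
qed

section \<open>Replacing one factor of an integrand\<close>

lemma abs_integral_diff_le_integral_sq_distr:
  fixes Y :: "'b \<Rightarrow> 'a" and G :: "'b \<Rightarrow> real" and t :: "'a \<Rightarrow> real"
  assumes P: "prob_space P" and Q: "prob_space Q" and sets_eq: "sets Q = sets P"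
    and Y: "Y \<in> measurable P M" and G: "G \<in> bounded_measurable P"
    and B: "\<And>x. x \<in> space P \<Longrightarrow> \<bar>G x\<bar> \<le> B"
    and t: "t \<in> bounded_measurable M" and "\<delta> > 0"
  shows "\<bar>(\<integral>x. t (Y x) * G x \<partial>P) - (\<integral>x. t (Y x) * G x \<partial>Q)\<bar>
    \<le> B * (((\<integral>z. (t z)\<^sup>2 \<partial>distr P M Y) + (\<integral>z. (t z)\<^sup>2 \<partial>distr Q M Y)) / (2 * \<delta>) + \<delta>)"
proof -
  have bound: "\<bar>\<integral>x. t (Y x) * G x \<partial>R\<bar> \<le> B * ((\<integral>z. (t z)\<^sup>2 \<partial>distr R M Y) / (2 * \<delta>) + \<delta> / 2)"
    if R: "prob_space R" "sets R = sets P" for R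
  proof -
    have Y_R: "Y \<in> measurable R M"
      using Y by (simp add: measurable_cong_sets[OF R(2) refl])
    have "G \<in> bounded_measurable R" "\<And>x. x \<in> space R \<Longrightarrow> \<bar>G x\<bar> \<le> B"
      using G B bounded_measurable_cong_sets[OF R(2)] sets_eq_imp_space_eq[OF R(2)] by auto
    moreover have "(\<lambda>z. (t z)\<^sup>2) \<in> borel_measurable M"
      using t by (auto simp: bounded_measurable_def)
    ultimately show ?thesis
      using abs_integral_mult_le_integral_sq[OF R(1) bounded_measurable_comp[OF t Y_R]] \<open>\<delta> > 0\<close>
      by (simp add: integral_distr[OF Y_R])
  qed
  have "\<bar>(\<integral>x. t (Y x) * G x \<partial>P) - (\<integral>x. t (Y x) * G x \<partial>Q)\<bar>
      \<le> B * ((\<integral>z. (t z)\<^sup>2 \<partial>distr P M Y) / (2 * \<delta>) + \<delta> / 2)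
        + B * ((\<integral>z. (t z)\<^sup>2 \<partial>distr Q M Y) / (2 * \<delta>) + \<delta> / 2)"
    using bound[OF P refl] bound[OF Q sets_eq] by linarith
  also have "\<dots> = B * (((\<integral>z. (t z)\<^sup>2 \<partial>distr P M Y) + (\<integral>z. (t z)\<^sup>2 \<partial>distr Q M Y)) / (2 * \<delta>) + \<delta>)"
    by (simp add: add_divide_distrib algebra_simps)
  finally show ?thesis .
qed

lemma integral_indicator_eq_if_dense:
  fixes Y :: "'b \<Rightarrow> 'a" and G :: "'b \<Rightarrow> real"
  assumes P: "prob_space P" and Q: "prob_space Q" and sets_eq: "sets Q = sets P"
    and Y: "Y \<in> measurable P M" and G: "G \<in> bounded_measurable P"
    and dense: "\<And>\<pi>. prob_space \<pi> \<Longrightarrow> sets \<pi> = sets M \<Longrightarrow> dense_in_L2 F \<pi>"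
    and F: "F \<subseteq> bounded_measurable M"
    and eq: "\<And>f. f \<in> F \<Longrightarrow> (\<integral>x. f (Y x) * G x \<partial>P) = (\<integral>x. f (Y x) * G x \<partial>Q)"
    and E: "E \<in> sets M"
  shows "(\<integral>x. indicator E (Y x) * G x \<partial>P) = (\<integral>x. indicator E (Y x) * G x \<partial>Q)"
proof -
  obtain B where "0 \<le> B" and B: "\<And>x. x \<in> space P \<Longrightarrow> \<bar>G x\<bar> \<le> B"
    using G bounded_measurableE by metis
  have Y_Q: "Y \<in> measurable Q M"
    using Y by (simp add: measurable_cong_sets[OF sets_eq refl])
  have integrable: "integrable R (\<lambda>x. h (Y x) * G x)"
    if "prob_space R" "sets R = sets P" "h \<in> bounded_measurable M" for R h
    using that Y G bounded_measurable_cong_sets[OF that(2)]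
    by (intro integrable_bounded_measurable prob_space.finite_measure
        bounded_measurable_mult[OF bounded_measurable_comp]) (auto simp: measurable_cong_sets[OF that(2) refl])
  have ind: "indicator E \<in> bounded_measurable M"
    using E by (rule indicator_bounded_measurable)
  define D where "D = (\<integral>x. indicator E (Y x) * G x \<partial>P) - (\<integral>x. indicator E (Y x) * G x \<partial>Q)"
  \<comment> \<open>An approximant of \<open>indicator E\<close> within \<open>\<delta>\<^sup>2\<close> in \<open>L\<^sup>2\<close> of both marginals makes \<open>D\<close> of order \<open>\<delta>\<close>.\<close>
  have "\<bar>D\<bar> \<le> 3 * B * \<delta>" if "\<delta> > 0" for \<delta>
  proof -
    have marginals: "prob_space (distr P M Y)" "sets (distr P M Y) = sets M"
      "prob_space (distr Q M Y)" "sets (distr Q M Y) = sets M"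
      using P Q Y Y_Q by (auto intro: prob_space.prob_space_distr)
    obtain f where f: "f \<in> F" "(\<integral>z. (indicator E z - f z)\<^sup>2 \<partial>distr P M Y) \<le> 2 * \<delta>\<^sup>2"
      "(\<integral>z. (indicator E z - f z)\<^sup>2 \<partial>distr Q M Y) \<le> 2 * \<delta>\<^sup>2"
      using simultaneous_L2_approximation[OF marginals dense F ind, of "\<delta>\<^sup>2"] \<open>\<delta> > 0\<close> by auto
    define t where "t z = indicator E z - f z" for z
    have t: "t \<in> bounded_measurable M"
      unfolding t_def using ind F f(1) by (intro bounded_measurable_diff) auto
    have "D = (\<integral>x. t (Y x) * G x \<partial>P) - (\<integral>x. t (Y x) * G x \<partial>Q)"
      using eq[OF f(1)] integrable[OF P refl] integrable[OF Q sets_eq] ind F f(1)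
      by (auto simp: D_def t_def left_diff_distrib Bochner_Integration.integral_diff)
    also have "\<bar>\<dots>\<bar> \<le> B * (((\<integral>z. (t z)\<^sup>2 \<partial>distr P M Y) + (\<integral>z. (t z)\<^sup>2 \<partial>distr Q M Y)) / (2 * \<delta>) + \<delta>)"
      by (rule abs_integral_diff_le_integral_sq_distr[OF P Q sets_eq Y G B t \<open>\<delta> > 0\<close>])
    also have "\<dots> \<le> B * ((2 * \<delta>\<^sup>2 + 2 * \<delta>\<^sup>2) / (2 * \<delta>) + \<delta>)"
      using f(2,3) \<open>\<delta> > 0\<close> \<open>0 \<le> B\<close> unfolding t_def
      by (intro mult_left_mono add_right_mono divide_right_mono add_mono) auto
    also have "\<dots> = 3 * B * \<delta>"
      using \<open>\<delta> > 0\<close> by (simp add: field_simps power2_eq_square)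
    finally show ?thesis .
  qed
  then have "D = 0"
    by (intro abs_le_mult_pos_imp_eq_0[of _ "3 * B"]) (simp add: mult.assoc)
  then show ?thesis
    unfolding D_def by simp
qed

lemma bounded_linear_integral_inner:
  fixes \<Phi> :: "'a \<Rightarrow> 'h::real_inner" and G :: "'a \<Rightarrow> real"
  assumes R: "prob_space R" and \<Phi>_meas: "\<And>h. (\<lambda>x. inner h (\<Phi> x)) \<in> borel_measurable R"
    and \<Phi>_bound: "\<And>x. x \<in> space R \<Longrightarrow> norm (\<Phi> x) \<le> C" and G: "G \<in> bounded_measurable R"
  shows "bounded_linear (\<lambda>h. \<integral>x. inner h (\<Phi> x) * G x \<partial>R)"
proof -
  obtain B where "0 \<le> B" and B: "\<And>x. x \<in> space R \<Longrightarrow> \<bar>G x\<bar> \<le> B"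
    using G bounded_measurableE by metis
  have integrable: "integrable R (\<lambda>x. inner h (\<Phi> x) * G x)" for h
    using \<Phi>_bound \<Phi>_meas
    by (intro integrable_bounded_measurable prob_space.finite_measure[OF R]
        bounded_measurable_mult[OF bounded_measurable_inner_feature G])
  show ?thesis
  proof (rule bounded_linear_intro[where K = "C * B"])
    show "(\<integral>x. inner (a + b) (\<Phi> x) * G x \<partial>R)
        = (\<integral>x. inner a (\<Phi> x) * G x \<partial>R) + (\<integral>x. inner b (\<Phi> x) * G x \<partial>R)" for a b
      using integrable by (simp add: inner_add_left distrib_right)
    show "(\<integral>x. inner (c *\<^sub>R a) (\<Phi> x) * G x \<partial>R) = c *\<^sub>R (\<integral>x. inner a (\<Phi> x) * G x \<partial>R)" for c a
      by (simp add: mult.assoc)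
    show "norm (\<integral>x. inner a (\<Phi> x) * G x \<partial>R) \<le> norm a * (C * B)" for a
    proof -
      have "\<bar>inner a (\<Phi> x) * G x\<bar> \<le> norm a * C * B" if "x \<in> space R" for x
      proof -
        have "\<bar>inner a (\<Phi> x)\<bar> \<le> norm a * C"
          using \<Phi>_bound[OF that] by (rule abs_inner_le_norm_mult)
        then show ?thesis
          unfolding abs_mult using B[OF that] by (intro mult_mono) auto
      qed
      then show ?thesis
        using R integrable by (simp add: abs_integral_le_bound mult.assoc)
    qed
  qed
qed

lemma integral_inner_eq_if_eq_on_features:
  fixes \<phi> :: "'a \<Rightarrow> 'h::{real_inner,complete_space}" and Y :: "'b \<Rightarrow> 'a" and G :: "'b \<Rightarrow> real"
  assumes P: "prob_space P" and Q: "prob_space Q" and sets_eq: "sets Q = sets P"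
    and Y: "Y \<in> measurable P M" and G: "G \<in> bounded_measurable P"
    and \<phi>_bound: "\<And>z. z \<in> space M \<Longrightarrow> norm (\<phi> z) \<le> C"
    and \<phi>_meas: "\<And>h. (\<lambda>z. inner h (\<phi> z)) \<in> borel_measurable M"
    and eq: "\<And>w. w \<in> space M \<Longrightarrow>
      (\<integral>x. inner (\<phi> w) (\<phi> (Y x)) * G x \<partial>P) = (\<integral>x. inner (\<phi> w) (\<phi> (Y x)) * G x \<partial>Q)"
  shows "(\<integral>x. inner h (\<phi> (Y x)) * G x \<partial>P) = (\<integral>x. inner h (\<phi> (Y x)) * G x \<partial>Q)"
proof -
  have Y_Q: "Y \<in> measurable Q M"
    using Y by (simp add: measurable_cong_sets[OF sets_eq refl])
  have space_eq: "space Q = space P"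
    using sets_eq by (rule sets_eq_imp_space_eq)
  have "bounded_linear (\<lambda>h. \<integral>x. inner h (\<phi> (Y x)) * G x \<partial>R)"
    if "prob_space R" "Y \<in> measurable R M" "G \<in> bounded_measurable R" for R
    using that \<phi>_bound \<phi>_meas
    by (intro bounded_linear_integral_inner[where C = C] measurable_compose[OF that(2)]) (auto simp: measurable_space)
  then have "bounded_linear (\<lambda>h. (\<integral>x. inner h (\<phi> (Y x)) * G x \<partial>P) - (\<integral>x. inner h (\<phi> (Y x)) * G x \<partial>Q))"
    using P Q Y Y_Q G bounded_measurable_cong_sets[OF sets_eq] by (intro bounded_linear_sub) auto
  then have "(\<integral>x. inner h (\<phi> (Y x)) * G x \<partial>P) - (\<integral>x. inner h (\<phi> (Y x)) * G x \<partial>Q) = 0"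
  proof (rule bounded_linear_eq_0_if_vanishes_on_set_and_orthogonal[where A = "\<phi> ` space M"])
    show "(\<integral>x. inner a (\<phi> (Y x)) * G x \<partial>P) - (\<integral>x. inner a (\<phi> (Y x)) * G x \<partial>Q) = 0"
      if "a \<in> \<phi> ` space M" for a
      using that eq by auto
    fix q assume "\<And>a. a \<in> \<phi> ` space M \<Longrightarrow> inner q a = 0"
    then have "inner q (\<phi> (Y x)) * G x = 0" if "x \<in> space P" for x
      using that Y by (auto simp: measurable_space)
    then have "(\<integral>x. inner q (\<phi> (Y x)) * G x \<partial>R) = (\<integral>x. 0 \<partial>R)" if "space R = space P" for R
      using that by (intro Bochner_Integration.integral_cong) auto
    then show "(\<integral>x. inner q (\<phi> (Y x)) * G x \<partial>P) - (\<integral>x. inner q (\<phi> (Y x)) * G x \<partial>Q) = 0"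
      using space_eq by simp
  qed
  then show ?thesis by simp
qed

section \<open>Probability measures on finite products\<close>

lemma extend_coordinatewise:
  fixes R :: "(nat \<Rightarrow> 'a) \<Rightarrow> bool"
  assumes step: "\<And>m f b. m < N \<Longrightarrow> (\<And>n. n < N \<Longrightarrow> f n \<in> C) \<Longrightarrow>
      (\<And>a. a \<in> A \<Longrightarrow> R (f(m := a))) \<Longrightarrow> b \<in> B \<Longrightarrow> R (f(m := b))"
    and "A \<subseteq> C" "B \<subseteq> C"
    and base: "\<And>f. (\<And>n. n < N \<Longrightarrow> f n \<in> A) \<Longrightarrow> R f"
    and f: "\<And>n. n < N \<Longrightarrow> f n \<in> B"
  shows "R f"
proof -
  have "R f" if "\<And>n. n < N \<Longrightarrow> f n \<in> (if n < k then B else A)" for k f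
    using that
  proof (induction k arbitrary: f)
    case 0
    then show ?case by (intro base) simp
  next
    case (Suc k)
    show ?case
    proof (cases "k < N")
      case True
      have "R (f(k := f k))"
      proof (rule step[OF True])
        show "f n \<in> C" if "n < N" for n
          using Suc.prems[OF that] assms(2,3) by (auto split: if_splits)
        show "R (f(k := a))" if "a \<in> A" for a
        proof (rule Suc.IH)
          show "(f(k := a)) n \<in> (if n < k then B else A)" if "n < N" for n
            using Suc.prems[OF that] \<open>a \<in> A\<close> by (auto split: if_splits)
        qed
        show "f k \<in> B"
          using Suc.prems[OF True] by simp
      qed
      then show ?thesis by simp
    next
      case False
      show ?thesis
      proof (rule Suc.IH)
        show "f n \<in> (if n < k then B else A)" if "n < N" for n
          using Suc.prems[OF that] False that by (auto split: if_splits)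
      qed
    qed
  qed
  from this[of f N] show ?thesis
    using f by simp
qed

lemma bounded_measurable_PiM_prod:
  assumes "finite I" "I \<subseteq> J" "\<And>i. i \<in> I \<Longrightarrow> f i \<in> bounded_measurable M"
  shows "(\<lambda>x. \<Prod>i\<in>I. f i (x i)) \<in> bounded_measurable (PiM J (\<lambda>_. M))"
  using assms
  by (intro bounded_measurable_prod bounded_measurable_comp[OF _ measurable_component_singleton]) auto

lemma prod_indicator_eq_indicator_PiE:
  assumes "x \<in> extensional I" "finite I"
  shows "(\<Prod>i\<in>I. indicator (E i) (x i) :: real) = indicator (PiE I E) x"
  using assms by (auto simp: indicator_def PiE_def Pi_def prod_zero_iff)

locale prob_pair_on_product =
  fixes M :: "'a measure" and N :: nat and P Q :: "(nat \<Rightarrow> 'a) measure"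
  assumes prob_P: "prob_space P" and prob_Q: "prob_space Q"
    and sets_P: "sets P = sets (PiM {..<N} (\<lambda>_. M))"
    and sets_Q: "sets Q = sets (PiM {..<N} (\<lambda>_. M))"
begin

definition products_agree :: "(nat \<Rightarrow> 'a \<Rightarrow> real) \<Rightarrow> bool" where
  "products_agree f \<longleftrightarrow> (\<integral>x. (\<Prod>n<N. f n (x n)) \<partial>P) = (\<integral>x. (\<Prod>n<N. f n (x n)) \<partial>Q)"

lemma products_agree_cong:
  assumes "\<And>n. n < N \<Longrightarrow> f n = g n"
  shows "products_agree f \<longleftrightarrow> products_agree g"
  using assms by (simp add: products_agree_def)

lemma products_agree_update_iff:
  assumes "m < N"
  shows "products_agree (f(m := g)) \<longleftrightarrow>
    (\<integral>x. g (x m) * (\<Prod>n\<in>{..<N}-{m}. f n (x n)) \<partial>P) = (\<integral>x. g (x m) * (\<Prod>n\<in>{..<N}-{m}. f n (x n)) \<partial>Q)"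
proof -
  have "(\<Prod>n<N. (f(m := g)) n (x n)) = g (x m) * (\<Prod>n\<in>{..<N}-{m}. f n (x n))" for x
  proof -
    have "(\<Prod>n<N. (f(m := g)) n (x n)) = (f(m := g)) m (x m) * (\<Prod>n\<in>{..<N}-{m}. (f(m := g)) n (x n))"
      using assms by (intro prod.remove) auto
    also have "(\<Prod>n\<in>{..<N}-{m}. (f(m := g)) n (x n)) = (\<Prod>n\<in>{..<N}-{m}. f n (x n))"
      by (rule prod.cong) auto
    finally show ?thesis by simp
  qed
  then show ?thesis
    by (simp add: products_agree_def)
qed

lemma sets_Q_eq_sets_P: "sets Q = sets P"
  using sets_P sets_Q by simp

lemma coordinate_measurable: "m < N \<Longrightarrow> (\<lambda>x. x m) \<in> measurable P M"
  using measurable_component_singleton[of m "{..<N}" "\<lambda>_. M"]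
  by (simp add: measurable_cong_sets[OF sets_P refl])

lemma other_factors_bounded_measurable:
  assumes "\<And>n. n < N \<Longrightarrow> f n \<in> bounded_measurable M"
  shows "(\<lambda>x. \<Prod>n\<in>{..<N}-{m}. f n (x n)) \<in> bounded_measurable P"
  using bounded_measurable_PiM_prod[of "{..<N}-{m}" "{..<N}" f M] assms bounded_measurable_cong_sets[OF sets_P]
  by auto

lemma products_agree_update_features:
  fixes \<phi> :: "'a \<Rightarrow> 'h::{real_inner,complete_space}"
  assumes "m < N" "\<And>n. n < N \<Longrightarrow> f n \<in> bounded_measurable M"
    and "\<And>z. z \<in> space M \<Longrightarrow> norm (\<phi> z) \<le> C"
    and "\<And>h. (\<lambda>z. inner h (\<phi> z)) \<in> borel_measurable M"
    and "\<And>w. w \<in> space M \<Longrightarrow> products_agree (f(m := \<lambda>z. inner (\<phi> w) (\<phi> z)))"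
  shows "products_agree (f(m := \<lambda>z. inner h (\<phi> z)))"
  unfolding products_agree_update_iff[OF assms(1)]
proof (rule integral_inner_eq_if_eq_on_features[OF prob_P prob_Q sets_Q_eq_sets_P
        coordinate_measurable[OF assms(1)] other_factors_bounded_measurable[OF assms(2)] assms(3,4)])
  fix w assume "w \<in> space M"
  then show "(\<integral>x. inner (\<phi> w) (\<phi> (x m)) * (\<Prod>n\<in>{..<N}-{m}. f n (x n)) \<partial>P)
    = (\<integral>x. inner (\<phi> w) (\<phi> (x m)) * (\<Prod>n\<in>{..<N}-{m}. f n (x n)) \<partial>Q)"
    using assms(5) unfolding products_agree_update_iff[OF assms(1)] by blast
qed

lemma products_agree_update_indicator:
  assumes "m < N" "\<And>n. n < N \<Longrightarrow> f n \<in> bounded_measurable M"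
    and "\<And>\<pi>. prob_space \<pi> \<Longrightarrow> sets \<pi> = sets M \<Longrightarrow> dense_in_L2 F \<pi>"
    and "F \<subseteq> bounded_measurable M"
    and "\<And>g. g \<in> F \<Longrightarrow> products_agree (f(m := g))"
    and "E \<in> sets M"
  shows "products_agree (f(m := indicator E))"
  unfolding products_agree_update_iff[OF assms(1)]
proof (rule integral_indicator_eq_if_dense[OF prob_P prob_Q sets_Q_eq_sets_P
      coordinate_measurable[OF assms(1)] other_factors_bounded_measurable[OF assms(2)] assms(3,4) _ assms(6)])
  fix g assume "g \<in> F"
  then show "(\<integral>x. g (x m) * (\<Prod>n\<in>{..<N}-{m}. f n (x n)) \<partial>P)
    = (\<integral>x. g (x m) * (\<Prod>n\<in>{..<N}-{m}. f n (x n)) \<partial>Q)"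
    using assms(5) unfolding products_agree_update_iff[OF assms(1)] by blast
qed

lemma eq_if_indicator_products_agree:
  assumes "\<And>E. (\<And>n. n < N \<Longrightarrow> E n \<in> sets M) \<Longrightarrow> products_agree (\<lambda>n. indicator (E n))"
  shows "P = Q"
proof (rule measure_eqI_PiM_finite[where A = "\<lambda>_. space (PiM {..<N} (\<lambda>_. M))"])
  show "sets P = PiM {..<N} (\<lambda>_. M)" "sets Q = PiM {..<N} (\<lambda>_. M)"
    using sets_P sets_Q by simp_all
  show "emeasure P (PiE {..<N} E) = emeasure Q (PiE {..<N} E)"
    if E: "\<And>n. n \<in> {..<N} \<Longrightarrow> E n \<in> sets M" for E
  proof -
    have "(\<integral>x. indicator (PiE {..<N} E) x \<partial>P) = (\<integral>x. indicator (PiE {..<N} E) x \<partial>Q :: real)"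
    proof -
      have "(\<integral>x. indicator (PiE {..<N} E) x \<partial>R) = (\<integral>x. (\<Prod>n<N. indicator (E n) (x n)) \<partial>R :: real)"
        if "sets R = sets (PiM {..<N} (\<lambda>_. M))" for R
        using sets_eq_imp_space_eq[OF that]
        by (intro Bochner_Integration.integral_cong refl prod_indicator_eq_indicator_PiE[symmetric])
          (auto simp: space_PiM PiE_def)
      then show ?thesis
        using assms[of E] E sets_P sets_Q by (simp add: products_agree_def)
    qed
    moreover have "PiE {..<N} E \<in> sets P" "PiE {..<N} E \<in> sets Q"
      using E sets_P sets_Q by (auto intro: sets_PiM_I_finite)
    ultimately show ?thesis
      using prob_space.finite_measure[OF prob_P] prob_space.finite_measure[OF prob_Q]
      by (simp add: finite_measure.emeasure_eq_measure)
  qed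
next
  show "emeasure P (space (PiM {..<N} (\<lambda>_. M))) \<noteq> \<infinity>" for i :: nat
    using prob_space.emeasure_space_1[OF prob_P] sets_eq_imp_space_eq[OF sets_P] by simp
qed (auto intro: prod_algebraI_finite simp: space_PiM)

lemma products_agree_if_kernel_sections:
  fixes \<phi> :: "'a \<Rightarrow> 'h::real_inner"
  assumes kernel: "\<And>y. y \<in> space (PiM {..<N} (\<lambda>_. M)) \<Longrightarrow> products_agree (\<lambda>n z. inner (\<phi> (y n)) (\<phi> z))"
    and sections: "\<And>n. n < N \<Longrightarrow> f n \<in> (\<lambda>w z. inner (\<phi> w) (\<phi> z)) ` space M"
  shows "products_agree f"
proof -
  have "\<forall>n. \<exists>w. n < N \<longrightarrow> w \<in> space M \<and> f n = (\<lambda>z. inner (\<phi> w) (\<phi> z))"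
    using sections by blast
  then obtain w where w: "\<And>n. n < N \<Longrightarrow> w n \<in> space M \<and> f n = (\<lambda>z. inner (\<phi> (w n)) (\<phi> z))"
    by metis
  have "restrict w {..<N} \<in> space (PiM {..<N} (\<lambda>_. M))"
    using w by (simp add: space_PiM PiE_iff)
  then have "products_agree (\<lambda>n z. inner (\<phi> (restrict w {..<N} n)) (\<phi> z))"
    by (rule kernel)
  moreover have "products_agree f \<longleftrightarrow> products_agree (\<lambda>n z. inner (\<phi> (restrict w {..<N} n)) (\<phi> z))"
    using w by (intro products_agree_cong) simp
  ultimately show ?thesis by simp
qed

lemma eq_if_kernel_products_agree:
  fixes \<phi> :: "'a \<Rightarrow> 'h::{real_inner,complete_space}"
  assumes \<phi>_bound: "\<And>z. z \<in> space M \<Longrightarrow> norm (\<phi> z) \<le> C"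
    and \<phi>_meas: "\<And>h. (\<lambda>z. inner h (\<phi> z)) \<in> borel_measurable M"
    and dense: "\<And>\<pi>. prob_space \<pi> \<Longrightarrow> sets \<pi> = sets M \<Longrightarrow> dense_in_L2 (rkhs \<phi>) \<pi>"
    and kernel: "\<And>y. y \<in> space (PiM {..<N} (\<lambda>_. M)) \<Longrightarrow> products_agree (\<lambda>n z. inner (\<phi> (y n)) (\<phi> z))"
  shows "P = Q"
proof -
  define sections where "sections = (\<lambda>w z. inner (\<phi> w) (\<phi> z)) ` space M"
  define indicators :: "('a \<Rightarrow> real) set" where "indicators = indicator ` sets M"
  have rkhs_bounded: "rkhs \<phi> \<subseteq> bounded_measurable M"
    using \<phi>_bound \<phi>_meas by (rule rkhs_subset_bounded_measurable)
  moreover have "sections \<subseteq> rkhs \<phi>"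
    by (auto simp: sections_def rkhs_def)
  ultimately have sections_bounded: "sections \<subseteq> bounded_measurable M"
    by (rule order_trans[rotated])
  have indicators_bounded: "indicators \<subseteq> bounded_measurable M"
    unfolding indicators_def using indicator_bounded_measurable by blast
  have sections_agree: "products_agree f" if "\<And>n. n < N \<Longrightarrow> f n \<in> sections" for f
    using kernel that unfolding sections_def by (rule products_agree_if_kernel_sections)
  have rkhs_agree: "products_agree f" if "\<And>n. n < N \<Longrightarrow> f n \<in> rkhs \<phi>" for f
  proof (rule extend_coordinatewise[OF _ sections_bounded rkhs_bounded sections_agree that])
    fix m f b assume m: "m < N" and f: "\<And>n. n < N \<Longrightarrow> f n \<in> bounded_measurable M"
      and agree: "\<And>a. a \<in> sections \<Longrightarrow> products_agree (f(m := a))" and "b \<in> rkhs \<phi>"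
    then obtain h where "b = (\<lambda>z. inner h (\<phi> z))"
      unfolding rkhs_def by blast
    moreover have "products_agree (f(m := \<lambda>z. inner (\<phi> w) (\<phi> z)))" if "w \<in> space M" for w
      using that by (intro agree) (simp add: sections_def)
    ultimately show "products_agree (f(m := b))"
      using products_agree_update_features[where f = f, OF m f \<phi>_bound \<phi>_meas] by blast
  qed
  have "products_agree f" if "\<And>n. n < N \<Longrightarrow> f n \<in> indicators" for f
  proof (rule extend_coordinatewise[OF _ rkhs_bounded indicators_bounded rkhs_agree that])
    fix m f b assume m: "m < N" and f: "\<And>n. n < N \<Longrightarrow> f n \<in> bounded_measurable M"
      and agree: "\<And>a. a \<in> rkhs \<phi> \<Longrightarrow> products_agree (f(m := a))" and "b \<in> indicators"
    then obtain E where "b = indicator E" "E \<in> sets M"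
      unfolding indicators_def by blast
    then show "products_agree (f(m := b))"
      using products_agree_update_indicator[where f = f, OF m f dense rkhs_bounded agree] by blast
  qed
  then show ?thesis
    by (intro eq_if_indicator_products_agree) (auto simp: indicators_def)
qed

end

section \<open>Kernel mean embeddings\<close>

lemma kernel_integrals_eq_if_mean_embeddings_eq:
  fixes \<psi> :: "'a \<Rightarrow> 'g::{real_inner,banach,second_countable_topology}" and K :: "'a \<Rightarrow> 'a \<Rightarrow> real"
  assumes feature: "\<And>x y. x \<in> space S \<Longrightarrow> y \<in> space S \<Longrightarrow> inner (\<psi> x) (\<psi> y) = K x y"
    and K_meas: "\<And>y. y \<in> space S \<Longrightarrow> (\<lambda>x. K x y) \<in> borel_measurable S"
    and K_bound: "\<And>x. x \<in> space S \<Longrightarrow> K x x \<le> B"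
    and P: "prob_space P" "sets P = sets S" and Q: "prob_space Q" "sets Q = sets S"
    and embeddings_eq: "mean_embedding P \<psi> = mean_embedding Q \<psi>" and y: "y \<in> space S"
  shows "(\<integral>x. K x y \<partial>P) = (\<integral>x. K x y \<partial>Q)"
proof -
  have \<psi>_meas: "\<psi> \<in> borel_measurable S"
  proof (rule borel_measurable_if_weakly_measurable, rule borel_measurable_inner_if_measurable_on_range)
    fix y assume "y \<in> space S"
    then show "(\<lambda>x. inner (\<psi> x) (\<psi> y)) \<in> borel_measurable S"
      using K_meas by (subst measurable_cong[OF feature]) auto
  qed
  have "(\<integral>x. K x y \<partial>R) = inner (mean_embedding R \<psi>) (\<psi> y)" if R: "prob_space R" "sets R = sets S" for R
  proof -
    have space_R: "space R = space S"
      using R(2) by (rule sets_eq_imp_space_eq)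
    have "norm (\<psi> x) \<le> sqrt B" if "x \<in> space S" for x
      using K_bound[OF that] feature[OF that that] by (simp add: norm_eq_sqrt_inner)
    then have "integrable R \<psi>"
      using \<psi>_meas R space_R measurable_cong_sets[OF R(2) refl]
      by (intro finite_measure.integrable_const_bound[where B = "sqrt B"] prob_space.finite_measure AE_I2) auto
    then have "inner (mean_embedding R \<psi>) (\<psi> y) = (\<integral>x. inner (\<psi> x) (\<psi> y) \<partial>R)"
      unfolding mean_embedding_def by (rule integral_inner_left[symmetric])
    also have "\<dots> = (\<integral>x. K x y \<partial>R)"
      using feature y space_R by (intro Bochner_Integration.integral_cong) auto
    finally show ?thesis ..
  qed
  then show ?thesis
    using P Q embeddings_eq by simp
qed

lemma (in prob_pair_on_product) kernel_products_agree_if_mean_embeddings_eq: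
  fixes \<phi> :: "'a \<Rightarrow> 'h::real_inner" and \<psi> :: "(nat \<Rightarrow> 'a) \<Rightarrow> 'g::{real_inner,banach,second_countable_topology}"
  assumes \<phi>_bound: "\<And>z. z \<in> space M \<Longrightarrow> norm (\<phi> z) \<le> C"
    and \<phi>_meas: "\<And>h. (\<lambda>z. inner h (\<phi> z)) \<in> borel_measurable M"
    and tensor: "\<And>x y. x \<in> space (PiM {..<N} (\<lambda>_. M)) \<Longrightarrow> y \<in> space (PiM {..<N} (\<lambda>_. M)) \<Longrightarrow>
      inner (\<psi> x) (\<psi> y) = (\<Prod>n<N. inner (\<phi> (y n)) (\<phi> (x n)))"
    and "mean_embedding P \<psi> = mean_embedding Q \<psi>" and y: "y \<in> space (PiM {..<N} (\<lambda>_. M))"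
  shows "products_agree (\<lambda>n z. inner (\<phi> (y n)) (\<phi> z))"
  unfolding products_agree_def
proof (rule kernel_integrals_eq_if_mean_embeddings_eq[OF tensor _ _ prob_P sets_P prob_Q sets_Q assms(4) y])
  have "(\<lambda>z. inner h (\<phi> z)) \<in> bounded_measurable M" for h
    using \<phi>_bound \<phi>_meas by (rule bounded_measurable_inner_feature)
  then show "(\<lambda>x. \<Prod>n<N. inner (\<phi> (w n)) (\<phi> (x n))) \<in> borel_measurable (PiM {..<N} (\<lambda>_. M))" for w
    using bounded_measurable_PiM_prod[of "{..<N}" "{..<N}" "\<lambda>n z. inner (\<phi> (w n)) (\<phi> z)" M]
    by (simp add: bounded_measurable_def)
next
  fix x assume x: "x \<in> space (PiM {..<N} (\<lambda>_. M))"
  then have "x n \<in> space M" if "n < N" for n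
    using that by (auto simp: space_PiM)
  then have "(\<Prod>n<N. inner (\<phi> (x n)) (\<phi> (x n))) \<le> (\<Prod>n<N. C\<^sup>2)"
    using \<phi>_bound by (intro prod_mono) (auto simp: power2_norm_eq_inner[symmetric] intro!: power_mono)
  then show "(\<Prod>n<N. inner (\<phi> (x n)) (\<phi> (x n))) \<le> (C\<^sup>2) ^ N"
    by simp
qed

lemma C0_rkhs_feature_map_bounded:
  fixes \<phi> :: "'a::topological_space \<Rightarrow> 'h::{real_inner,complete_space}"
  assumes "closed X" "\<forall>f\<in>rkhs \<phi>. f \<in> C0_on X"
  obtains C where "\<And>z. z \<in> X \<Longrightarrow> norm (\<phi> z) \<le> C"
proof -
  have weakly_bounded: "\<exists>B. \<forall>z\<in>X. \<bar>inner h (\<phi> z)\<bar> \<le> B" for h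
  proof -
    have "(\<lambda>z. inner h (\<phi> z)) \<in> C0_on X"
      using assms(2) by (auto simp: rkhs_def)
    then obtain B where "\<And>z. z \<in> X \<Longrightarrow> \<bar>inner h (\<phi> z)\<bar> \<le> B"
      using assms(1) C0_on_bounded by metis
    then show ?thesis
      by blast
  qed
  show ?thesis
    by (rule bounded_norm_if_weakly_bounded[OF weakly_bounded that])
qed

lemma C0_rkhs_feature_functionals_measurable:
  assumes "\<forall>f\<in>rkhs \<phi>. f \<in> C0_on X"
  shows "(\<lambda>z. inner h (\<phi> z)) \<in> borel_measurable (restrict_space borel X)"
proof -
  have "(\<lambda>z. inner h (\<phi> z)) \<in> C0_on X"
    using assms by (auto simp: rkhs_def)
  then show ?thesis
    unfolding C0_on_def by (auto intro: borel_measurable_continuous_on_restrict)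
qed

lemma inner_tensor_feature_map:
  assumes "\<forall>x\<in>X. \<forall>y\<in>X. k x y = feature_kernel \<phi> x y"
    and "\<forall>x\<in>space (prod_space X N). \<forall>y\<in>space (prod_space X N). inner (\<psi> x) (\<psi> y) = (\<Prod>n<N. k (x n) (y n))"
    and x: "x \<in> space (prod_space X N)" and y: "y \<in> space (prod_space X N)"
  shows "inner (\<psi> x) (\<psi> y) = (\<Prod>n<N. inner (\<phi> (y n)) (\<phi> (x n)))"
proof -
  have "x n \<in> X" "y n \<in> X" if "n < N" for n
    using that x y by (auto simp: prod_space_def space_PiM space_restrict_space)
  then show ?thesis
    using assms(1,2) x y by (auto simp: feature_kernel_def inner_commute intro!: prod.cong)
qed

theorem mainTheorem1:
  fixes X :: "(real ^ 'd) set"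
    and \<phi> :: "real ^ 'd \<Rightarrow> 'h::{real_inner, complete_space}"
    and k :: "real ^ 'd \<Rightarrow> real ^ 'd \<Rightarrow> real"
    and N :: nat
    and \<psi> :: "(nat \<Rightarrow> real ^ 'd) \<Rightarrow> 'g::{real_inner, banach, second_countable_topology}"
  assumes "closed X"
    and "\<forall>x\<in>X. \<forall>y\<in>X. k x y = feature_kernel \<phi> x y"
    and D: "\<forall>f\<in>rkhs \<phi>. f \<in> C0_on X"
    and E: "\<forall>\<pi>. prob_space \<pi> \<and> sets \<pi> = sets (restrict_space borel X) \<longrightarrow> dense_in_L2 (rkhs \<phi>) \<pi>"
    and tensor: "\<forall>x\<in>space (prod_space X N). \<forall>y\<in>space (prod_space X N).
                   inner (\<psi> x) (\<psi> y) = (\<Prod>n<N. k (x n) (y n))"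
  shows "characteristic (prod_space X N) \<psi>"
proof -
  define M where "M = restrict_space borel X"
  have space_M: "space M = X" and prod_space: "prod_space X N = PiM {..<N} (\<lambda>_. M)"
    by (simp_all add: M_def prod_space_def space_restrict_space)
  obtain C where C: "\<And>z. z \<in> space M \<Longrightarrow> norm (\<phi> z) \<le> C"
    using C0_rkhs_feature_map_bounded[OF \<open>closed X\<close> D] unfolding space_M by blast
  have \<phi>_meas: "(\<lambda>z. inner h (\<phi> z)) \<in> borel_measurable M" for h
    unfolding M_def using D by (rule C0_rkhs_feature_functionals_measurable)
  have kernel: "inner (\<psi> x) (\<psi> y) = (\<Prod>n<N. inner (\<phi> (y n)) (\<phi> (x n)))"
    if "x \<in> space (PiM {..<N} (\<lambda>_. M))" "y \<in> space (PiM {..<N} (\<lambda>_. M))" for x y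
    using inner_tensor_feature_map[OF assms(2) tensor] that unfolding prod_space .
  show ?thesis
    unfolding characteristic_def
  proof (intro allI impI, elim conjE)
    fix P Q assume "prob_space P" "prob_space Q" "sets P = sets (prod_space X N)"
      "sets Q = sets (prod_space X N)" "mean_embedding P \<psi> = mean_embedding Q \<psi>"
    then interpret prob_pair_on_product M N P Q
      unfolding prod_space by (intro prob_pair_on_product.intro)
    show "P = Q"
    proof (rule eq_if_kernel_products_agree[OF C \<phi>_meas])
      show "dense_in_L2 (rkhs \<phi>) \<pi>" if "prob_space \<pi>" "sets \<pi> = sets M" for \<pi>
        using E that by (simp add: M_def)
      show "products_agree (\<lambda>n z. inner (\<phi> (y n)) (\<phi> z))" if "y \<in> space (PiM {..<N} (\<lambda>_. M))" for y
        using kernel_products_agree_if_mean_embeddings_eq[OF C \<phi>_meas kernel] that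
          \<open>mean_embedding P \<psi> = mean_embedding Q \<psi>\<close> by blast
    qed
  qed
qed

end
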